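(* $\mathfrak{ss}_{cc}\leq\mathfrak d$ and $\mathfrak b\leq\mathfrak{ss}_{cc}^\perp$.
   Context: Let $\mathfrak S$ be the set of all sequences $\mathbf a=\langle a_i:i\in\omega\rangle$ of rational numbers with $a_i\to 0$. Let $[\omega]^\omega_\omega$ denote the set of infinite coinfinite subsets of $\omega$. For infinite $X\subseteq\omega$ with increasing enumeration $\langle i_n\rangle$ write $\sum_X\mathbf a$ for $\sum_n a_{i_n}$. A series is convergent if its partial sums converge to a real number; it is conditional if $\sum_{\{i:a_i>0\}}\mathbf a=\infty$ and $\sum_{\{i:a_i<0\}}\mathbf a=-\infty$; conditionally convergent if both. Let $\mathfrak S_{cc}$ be the set of $\mathbf a\in\mathfrak S$ with $\sum\mathbf a$ conditionally convergent. $\mathfrak{ss}_{cc}$ is the least cardinality of a family $\mathcal X\subseteq[\omega]^\omega_\omega$ such that for every $\mathbf a\in\mathfrak S_{cc}$ there is $X\in\mathcal X$ with $\sum_X\mathbf a$ conditionally convergent; $\mathfrak{ss}_{cc}^\perp$ is the least cardinality of a family $\mathcal A\subseteq\mathfrak S_{cc}$ such that no $X\in[\omega]^\omega_\omega$ makes $\sum_X\mathbf a$ conditionally convergent for all $\mathbf a\in\mathcal A$. $\mathfrak b$ and $\mathfrak d$ are the bounding and dominating numbers. *)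

theory Defs
  imports "HOL-Analysis.Analysis" "HOL-Library.Infinite_Set"
begin

definition null_seq :: "(nat \<Rightarrow> rat) \<Rightarrow> bool" where
  "null_seq a \<longleftrightarrow> (\<lambda>i. real_of_rat (a i)) \<longlonglongrightarrow> 0"

definition inf_coinf :: "nat set \<Rightarrow> bool" where
  "inf_coinf X \<longleftrightarrow> infinite X \<and> infinite (- X)"

definition sub_psum :: "(nat \<Rightarrow> rat) \<Rightarrow> nat set \<Rightarrow> nat \<Rightarrow> real" where
  "sub_psum a X n = (\<Sum>k<n. real_of_rat (a (enumerate X k)))"

definition sub_convergent :: "(nat \<Rightarrow> rat) \<Rightarrow> nat set \<Rightarrow> bool" where
  "sub_convergent a X \<longleftrightarrow> infinite X \<and> convergent (sub_psum a X)"

definition sub_sum_pinf :: "(nat \<Rightarrow> rat) \<Rightarrow> nat set \<Rightarrow> bool" where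
  "sub_sum_pinf a Y \<longleftrightarrow> infinite Y \<and> filterlim (sub_psum a Y) at_top sequentially"

definition sub_sum_minf :: "(nat \<Rightarrow> rat) \<Rightarrow> nat set \<Rightarrow> bool" where
  "sub_sum_minf a Y \<longleftrightarrow> infinite Y \<and> filterlim (sub_psum a Y) at_bot sequentially"

definition sub_conditional :: "(nat \<Rightarrow> rat) \<Rightarrow> nat set \<Rightarrow> bool" where
  "sub_conditional a X \<longleftrightarrow>
     sub_sum_pinf a {i \<in> X. a i > 0} \<and> sub_sum_minf a {i \<in> X. a i < 0}"

definition sub_cc :: "(nat \<Rightarrow> rat) \<Rightarrow> nat set \<Rightarrow> bool" where
  "sub_cc a X \<longleftrightarrow> sub_convergent a X \<and> sub_conditional a X"

definition S_cc :: "(nat \<Rightarrow> rat) set" where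
  "S_cc = {a. null_seq a \<and> sub_cc a UNIV}"

definition ss_cc_family :: "nat set set \<Rightarrow> bool" where
  "ss_cc_family \<X> \<longleftrightarrow> \<X> \<subseteq> Collect inf_coinf \<and> (\<forall>a\<in>S_cc. \<exists>X\<in>\<X>. sub_cc a X)"

definition ss_cc_perp_family :: "(nat \<Rightarrow> rat) set \<Rightarrow> bool" where
  "ss_cc_perp_family \<A> \<longleftrightarrow> \<A> \<subseteq> S_cc \<and> \<not> (\<exists>X. inf_coinf X \<and> (\<forall>a\<in>\<A>. sub_cc a X))"

definition le_star :: "(nat \<Rightarrow> nat) \<Rightarrow> (nat \<Rightarrow> nat) \<Rightarrow> bool" where
  "le_star f g \<longleftrightarrow> (\<forall>\<^sub>F n in sequentially. f n \<le> g n)"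

definition dominating :: "(nat \<Rightarrow> nat) set \<Rightarrow> bool" where
  "dominating D \<longleftrightarrow> (\<forall>f. \<exists>g\<in>D. le_star f g)"

definition unbounded :: "(nat \<Rightarrow> nat) set \<Rightarrow> bool" where
  "unbounded B \<longleftrightarrow> (\<forall>g. \<exists>f\<in>B. \<not> le_star f g)"

(* "min{|x| : P x} <= min{|y| : Q y}" for cardinal characteristics given as least
   cardinalities of witnessing families: every Q-family y has a P-family x
   with |x| <=o |y| (this also asserts that the left minimum exists when the right one does). *)
definition min_card_le :: "('a set \<Rightarrow> bool) \<Rightarrow> ('b set \<Rightarrow> bool) \<Rightarrow> bool" where
  "min_card_le P Q \<longleftrightarrow> (\<forall>y. Q y \<longrightarrow> (\<exists>x. P x \<and> ordLeq3 (card_of x) (card_of y)))"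

end

theory Submission
  imports Defs
begin

text \<open>If the sum of \<open>|a i|\<close> over \<open>i \<in> Y\<close> is finite, deleting \<open>Y\<close> changes the partial sums of \<open>a\<close>,
  of its positive part and of its negative part only by convergent amounts, so a conditionally
  convergent series stays conditionally convergent on \<open>- Y\<close>. Let \<open>f a n\<close> be an index beyond
  which \<open>|a i| < 2\<^sup>-\<^sup>n\<close>. If \<open>f a \<le>\<^sup>* g\<close> and \<open>Y g\<close> is the range of a strictly increasing
  sequence of even numbers \<open>y n \<ge> g n\<close>, then the sum of \<open>|a i|\<close> over \<open>Y g\<close> is eventually
  dominated by a geometric series, while \<open>- Y g\<close> is infinite and coinfinite. Hence a dominating
  family \<open>D\<close> yields the witnessing family \<open>{- Y g | g \<in> D}\<close>, and a family \<open>A\<close> with no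
  common witness yields the unbounded family \<open>{f a | a \<in> A}\<close>.\<close>

abbreviation real_seq :: "(nat \<Rightarrow> rat) \<Rightarrow> nat \<Rightarrow> real" where
  "real_seq a \<equiv> \<lambda>i. real_of_rat (a i)"

definition psum_on :: "(nat \<Rightarrow> real) \<Rightarrow> nat set \<Rightarrow> nat \<Rightarrow> real" where
  "psum_on u S n = (\<Sum>i<n. if i \<in> S then u i else 0)"

lemma convergent_psum_on_iff: "convergent (psum_on u S) \<longleftrightarrow> summable (\<lambda>i. if i \<in> S then u i else 0)"
  unfolding psum_on_def summable_iff_convergent ..

lemma psum_on_Diff: "psum_on u (S - Y) n = psum_on u S n - psum_on u (S \<inter> Y) n"
  unfolding psum_on_def by (simp flip: sum_subtractf) (rule sum.cong, auto)

lemma sum_enumerate_eq_psum_on: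
  assumes "infinite S"
  shows "(\<Sum>k<n. u (enumerate S k)) = psum_on u S (enumerate S n)"
proof -
  let ?v = "\<lambda>i. if i \<in> S then u i else 0"
  have "(\<Sum>k<n. u (enumerate S k)) = (\<Sum>k<n. ?v (enumerate S k))"
    using enumerate_in_set[OF assms] by simp
  also have "\<dots> = sum ?v (enumerate S ` {..<n})"
    using inj_enumerate[OF assms] by (simp add: sum.reindex inj_on_subset)
  also have "\<dots> = psum_on u S (enumerate S n)"
    unfolding psum_on_def
  proof (rule sum.mono_neutral_left)
    show "enumerate S ` {..<n} \<subseteq> {..<enumerate S n}"
      using assms by auto
    show "\<forall>i\<in>{..<enumerate S n} - enumerate S ` {..<n}. ?v i = 0"
    proof
      fix i assume i: "i \<in> {..<enumerate S n} - enumerate S ` {..<n}"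
      show "?v i = 0"
      proof (cases "i \<in> S")
        case True
        then obtain j where "enumerate S j = i"
          using enumerate_Ex[OF assms] by blast
        with i assms show ?thesis by auto
      qed simp
    qed
  qed simp
  finally show ?thesis .
qed

text \<open>Between consecutive elements of \<open>S\<close> the partial sums \<open>psum_on u S\<close> are constant.\<close>

lemma filterlim_psum_on_enumerate_iff:
  assumes S: "infinite S"
  shows "filterlim (\<lambda>n. psum_on u S (enumerate S n)) F sequentially
    \<longleftrightarrow> filterlim (psum_on u S) F sequentially"
proof
  assume "filterlim (psum_on u S) F sequentially"
  then show "filterlim (\<lambda>n. psum_on u S (enumerate S n)) F sequentially"
    using filterlim_compose filterlim_subseq[OF strict_mono_enumerate[OF S]] by blast
next
  assume lim: "filterlim (\<lambda>n. psum_on u S (enumerate S n)) F sequentially"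
  define k where "k m = (LEAST k. m \<le> enumerate S k)" for m
  have le_k: "m \<le> enumerate S (k m)" for m
    unfolding k_def by (rule LeastI) (rule le_enumerate[OF S])
  have below_k: "enumerate S j < m" if "j < k m" for j m
    using not_less_Least[OF that[unfolded k_def]] by simp
  have gap: "i \<notin> S" if "m \<le> i" "i < enumerate S (k m)" for i m
    using that below_k enumerate_Ex[OF S] enumerate_mono_iff[OF S] by (metis leD)
  have psum_k: "psum_on u S (enumerate S (k m)) = psum_on u S m" for m
    unfolding psum_on_def by (rule sum.mono_neutral_right) (use le_k gap in auto)
  have "filterlim k sequentially sequentially"
    unfolding filterlim_at_top eventually_sequentially
  proof
    fix K
    have "K \<le> k m" if "enumerate S K < m" for m
    proof (rule ccontr)
      assume "\<not> K \<le> k m"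
      then have "enumerate S (k m) \<le> enumerate S K"
        using S by simp
      with le_k[of m] that show False by simp
    qed
    then show "\<exists>N. \<forall>m\<ge>N. K \<le> k m"
      by (intro exI[of _ "Suc (enumerate S K)"]) auto
  qed
  from filterlim_compose[OF lim this] show "filterlim (psum_on u S) F sequentially"
    by (simp add: psum_k)
qed

lemma filterlim_sub_psum_iff:
  assumes "infinite S"
  shows "filterlim (sub_psum a S) F sequentially \<longleftrightarrow> filterlim (psum_on (real_seq a) S) F sequentially"
proof -
  have "sub_psum a S = (\<lambda>n. psum_on (real_seq a) S (enumerate S n))"
    unfolding sub_psum_def using sum_enumerate_eq_psum_on[OF assms, of "real_seq a"] by simp
  then show ?thesis
    using filterlim_psum_on_enumerate_iff[OF assms] by simp
qed

lemma infinite_if_filterlim_psum_on_at_infinity: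
  assumes "filterlim (psum_on u S) at_infinity sequentially"
  shows "infinite S"
proof
  assume "finite S"
  then have "convergent (psum_on u S)"
    unfolding convergent_psum_on_iff by (rule summable_finite) simp
  with assms show False
    unfolding convergent_def using not_tendsto_and_filterlim_at_infinity trivial_limit_sequentially by blast
qed

lemma sub_convergent_iff: "sub_convergent a X \<longleftrightarrow> infinite X \<and> convergent (psum_on (real_seq a) X)"
  unfolding sub_convergent_def convergent_def using filterlim_sub_psum_iff by blast

lemma sub_sum_pinf_iff: "sub_sum_pinf a Y \<longleftrightarrow> filterlim (psum_on (real_seq a) Y) at_top sequentially"
  unfolding sub_sum_pinf_def
  using filterlim_sub_psum_iff infinite_if_filterlim_psum_on_at_infinity filterlim_at_top_imp_at_infinity
  by blast

lemma sub_sum_minf_iff: "sub_sum_minf a Y \<longleftrightarrow> filterlim (psum_on (real_seq a) Y) at_bot sequentially"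
  unfolding sub_sum_minf_def
  using filterlim_sub_psum_iff infinite_if_filterlim_psum_on_at_infinity
    filterlim_mono[OF _ at_bot_le_at_infinity order_refl]
  by blast

lemma psum_on_Diff_absolutely_summable:
  assumes Y: "summable (\<lambda>i. if i \<in> Y then \<bar>u i\<bar> else 0)"
  shows "convergent (psum_on u S) \<Longrightarrow> convergent (psum_on u (S - Y))"
    and "filterlim (psum_on u S) at_top sequentially \<Longrightarrow> filterlim (psum_on u (S - Y)) at_top sequentially"
    and "filterlim (psum_on u S) at_bot sequentially \<Longrightarrow> filterlim (psum_on u (S - Y)) at_bot sequentially"
proof -
  have "summable (\<lambda>i. if i \<in> S \<inter> Y then u i else 0)"
    by (rule summable_comparison_test[OF _ Y]) auto
  then obtain c where c: "(\<lambda>n. - psum_on u (S \<inter> Y) n) \<longlonglongrightarrow> c"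
    unfolding convergent_psum_on_iff[symmetric] convergent_def by (blast intro: tendsto_minus)
  have Diff: "psum_on u (S - Y) = (\<lambda>n. - psum_on u (S \<inter> Y) n + psum_on u S n)"
    by (rule ext) (simp add: psum_on_Diff)
  show "convergent (psum_on u S) \<Longrightarrow> convergent (psum_on u (S - Y))"
    unfolding Diff using c convergent_add convergent_def by blast
  show "filterlim (psum_on u S) at_top sequentially \<Longrightarrow> filterlim (psum_on u (S - Y)) at_top sequentially"
    unfolding Diff using c by (rule filterlim_tendsto_add_at_top)
  show "filterlim (psum_on u S) at_bot sequentially \<Longrightarrow> filterlim (psum_on u (S - Y)) at_bot sequentially"
    unfolding Diff using filterlim_tendsto_add_at_bot_iff[OF c] by blast
qed

lemma sub_cc_Compl:
  assumes cc: "sub_cc a UNIV"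
    and Y: "summable (\<lambda>i. if i \<in> Y then \<bar>real_of_rat (a i)\<bar> else 0)"
  shows "sub_cc a (- Y)"
proof -
  note Diff = psum_on_Diff_absolutely_summable[OF Y]
  from cc have conv: "convergent (psum_on (real_seq a) UNIV)"
    and pos: "filterlim (psum_on (real_seq a) {i. 0 < a i}) at_top sequentially"
    and neg: "filterlim (psum_on (real_seq a) {i. a i < 0}) at_bot sequentially"
    by (simp_all add: sub_cc_def sub_conditional_def sub_convergent_iff sub_sum_pinf_iff sub_sum_minf_iff)
  have "{i \<in> - Y. 0 < a i} = {i. 0 < a i} - Y" "{i \<in> - Y. a i < 0} = {i. a i < 0} - Y"
    by auto
  then have cond: "sub_conditional a (- Y)"
    unfolding sub_conditional_def sub_sum_pinf_iff sub_sum_minf_iff using Diff(2)[OF pos] Diff(3)[OF neg]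
    by simp
  then have "infinite {i \<in> - Y. 0 < a i}"
    unfolding sub_conditional_def sub_sum_pinf_def by blast
  then have "infinite (- Y)"
    by (rule infinite_super[rotated]) auto
  moreover have "convergent (psum_on (real_seq a) (- Y))"
    using Diff(1)[OF conv] by (simp add: Compl_eq_Diff_UNIV)
  ultimately show ?thesis
    using cond by (simp add: sub_cc_def sub_convergent_iff)
qed

definition null_modulus :: "(nat \<Rightarrow> rat) \<Rightarrow> nat \<Rightarrow> nat" where
  "null_modulus a n = (LEAST m. \<forall>i\<ge>m. \<bar>real_of_rat (a i)\<bar> < (1/2)^n)"

lemma null_modulus_bound:
  assumes "null_seq a" "null_modulus a n \<le> i"
  shows "\<bar>real_of_rat (a i)\<bar> < (1/2)^n"
proof -
  have "\<exists>m. \<forall>i\<ge>m. \<bar>real_of_rat (a i)\<bar> < (1/2)^n"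
    using assms(1) unfolding null_seq_def LIMSEQ_iff by simp
  from LeastI_ex[OF this] assms(2) show ?thesis
    unfolding null_modulus_def by blast
qed

definition even_majorant :: "(nat \<Rightarrow> nat) \<Rightarrow> nat \<Rightarrow> nat" where
  "even_majorant g n = 2 * (n + (\<Sum>k\<le>n. g k))"

lemma strict_mono_even_majorant: "strict_mono (even_majorant g)"
  unfolding strict_mono_Suc_iff even_majorant_def by simp

lemma le_even_majorant: "g n \<le> even_majorant g n"
  using member_le_sum[of n "{..n}" g] unfolding even_majorant_def by simp

lemma inf_coinf_Compl_range_even_majorant: "inf_coinf (- range (even_majorant g))"
proof -
  have "infinite (range (even_majorant g))"
    using range_inj_infinite strict_mono_imp_inj_on[OF strict_mono_even_majorant] by blast
  moreover have "infinite (- range (even_majorant g))"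
    unfolding infinite_nat_iff_unbounded
  proof
    fix m
    have "Suc (2 * m) \<notin> range (even_majorant g)"
      unfolding even_majorant_def by auto presburger
    then show "\<exists>n>m. n \<in> - range (even_majorant g)"
      by (intro exI[of _ "Suc (2 * m)"]) auto
  qed
  ultimately show ?thesis
    unfolding inf_coinf_def by simp
qed

lemma summable_abs_on_range_even_majorant:
  assumes "null_seq a" "le_star (null_modulus a) g"
  shows "summable (\<lambda>i. if i \<in> range (even_majorant g) then \<bar>real_of_rat (a i)\<bar> else 0)"
proof -
  have "\<forall>\<^sub>F n in sequentially. norm \<bar>real_of_rat (a (even_majorant g n))\<bar> \<le> (1/2)^n"
    using assms(2) unfolding le_star_def
  proof eventually_elim
    case (elim n)
    then have "null_modulus a n \<le> even_majorant g n"
      using le_even_majorant[of g n] by linarith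
    then show ?case using null_modulus_bound[OF assms(1)] by fastforce
  qed
  then have "summable (\<lambda>n. \<bar>real_of_rat (a (even_majorant g n))\<bar>)"
    by (rule summable_comparison_test_ev) simp
  then show ?thesis
    by (subst summable_mono_reindex[OF strict_mono_even_majorant, symmetric]) auto
qed

lemma sub_cc_Compl_range_even_majorant:
  assumes "a \<in> S_cc" "le_star (null_modulus a) g"
  shows "sub_cc a (- range (even_majorant g))"
  using assms sub_cc_Compl summable_abs_on_range_even_majorant unfolding S_cc_def by blast

lemma ss_cc_le_d: "min_card_le ss_cc_family dominating"
  unfolding min_card_le_def
proof (intro allI impI)
  fix D assume "dominating D"
  then have "ss_cc_family ((\<lambda>g. - range (even_majorant g)) ` D)"
    unfolding ss_cc_family_def dominating_def
    using inf_coinf_Compl_range_even_majorant sub_cc_Compl_range_even_majorant by blast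
  then show "\<exists>\<X>. ss_cc_family \<X> \<and> ordLeq3 (card_of \<X>) (card_of D)"
    using card_of_image by blast
qed

lemma b_le_ss_cc_perp: "min_card_le unbounded ss_cc_perp_family"
  unfolding min_card_le_def
proof (intro allI impI)
  fix A assume A: "ss_cc_perp_family A"
  have "unbounded (null_modulus ` A)"
    unfolding unbounded_def
  proof (rule allI, rule ccontr)
    fix g assume "\<not> (\<exists>f\<in>null_modulus ` A. \<not> le_star f g)"
    then have "\<forall>a\<in>A. sub_cc a (- range (even_majorant g))"
      using A sub_cc_Compl_range_even_majorant unfolding ss_cc_perp_family_def by blast
    then show False
      using A inf_coinf_Compl_range_even_majorant unfolding ss_cc_perp_family_def by blast
  qed
  then show "\<exists>B. unbounded B \<and> ordLeq3 (card_of B) (card_of A)"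
    using card_of_image by blast
qed

theorem mainTheorem5:
  shows "min_card_le ss_cc_family dominating \<and> min_card_le unbounded ss_cc_perp_family"
  using ss_cc_le_d b_le_ss_cc_perp ..

end
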